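(* Let $\nu$ be a translation invariant EA$_\beta$ spin glass distribution on $\mathbb Z^2$ ($0\le\beta<\infty$), and let $\gamma$ be a finite dual graph which is a union of disjoint simple dual cycles. Then for every $c>0$, \[\mathbb P_\nu\Big(\sum_{e^*\in\gamma}w_e\sigma_{i_e}\sigma_{j_e}\leq -c\Big)<e^{-2\beta c},\] where $e=\{i_e,j_e\}$ is the primal edge crossed by $e^*$. Moreover, for every finite subgraph $D$ of $\mathbb Z^2$ with $D_\gamma\subseteq D$, every boundary condition $\tau$ and every realization of the interactions $w$, \[\mathbb P^{D,\tau}_{w,\beta}(\text{every edge of }\gamma\text{ is unsatisfied})<e^{-2\beta|w|(\gamma)}.\]
   Context: Lattice $\mathbb Z^2$, dual lattice $(\mathbb Z^2)^*=(\tfrac12,\tfrac12)+\mathbb Z^2$; a dual edge $e^*$ is identified with the unique edge $e$ of $\mathbb Z^2$ it crosses and carries its interaction $w_e$. $D_\gamma$ is the set of vertices of $\mathbb Z^2$ lying in the bounded domains enclosed by $\gamma$; $|w|(\gamma)=\sum_{e^*\in\gamma}|w_e|$. For a finite subgraph $C$: $C^c$ is the subgraph on $\mathbb Z^2\setminus V(C)$, $\partial C^c$ the vertices of $C^c$ with a neighbour in $C$, $\bar C=C\cup\partial C^c$; for $\tau\in\{\pm1\}^{V(\partial C^c)}$, $\Omega^{C,\tau}$ is the set of spin configurations on $\bar C$ equal to $\tau$ on $\partial C^c$, $\mathcal H^{C,\tau}_w(\sigma)=-\sum w_{xy}\sigma_x\sigma_y$ over neighbouring pairs in $\bar C$, and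 $\mathbb P^{C,\tau}_{w,\beta}(\sigma)\propto e^{-\beta\mathcal H^{C,\tau}_w(\sigma)}$. An EA$_\beta$ spin glass distribution is a joint law of interactions $w$ (i.i.d. standard normal) and spins $\sigma\in\{\pm1\}^{\mathbb Z^2}$ such that for every finite $C$ the conditional law of $\sigma_{\bar C}$ given $\sigma_{C^c}$ and $w$ is $\mathbb P^{C,\sigma_{\partial C^c}}_{w,\beta}$; translation invariance is under the diagonal action of $\mathbb Z^2$. An edge $e=\{i,j\}$ (and $e^*$) is unsatisfied if $w_e\sigma_i\sigma_j<0$. *)

theory Defs
  imports "HOL-Probability.Probability"
begin

type_synonym vtx = "int \<times> int"

text \<open>An edge of Z^2 is encoded by its lower/left endpoint and a direction flag:
  (x, False) is the horizontal edge {x, x+(1,0)}, (x, True) the vertical edge {x, x+(0,1)}.\<close>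
type_synonym edge = "vtx \<times> bool"

definition src :: "edge \<Rightarrow> vtx" where
  "src e = fst e"

definition tgt :: "edge \<Rightarrow> vtx" where
  "tgt e = (if snd e then (fst (fst e), snd (fst e) + 1) else (fst (fst e) + 1, snd (fst e)))"

definition adj :: "vtx \<Rightarrow> vtx \<Rightarrow> bool" where
  "adj u v \<longleftrightarrow> \<bar>fst u - fst v\<bar> + \<bar>snd u - snd v\<bar> = 1"

text \<open>Dual vertices (1/2,1/2) + (a,b) are encoded by the integer pair (a,b).
  A dual edge is identified with the primal edge it crosses; its two dual endpoints:\<close>
definition dual_ends :: "edge \<Rightarrow> vtx set" where
  "dual_ends e = (let (a, b) = fst e in
     if snd e then {(a - 1, b), (a, b)} else {(a, b - 1), (a, b)})"

definition dpt :: "vtx \<Rightarrow> real \<times> real" where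
  "dpt v = (real_of_int (fst v) + 1/2, real_of_int (snd v) + 1/2)"

definition ppt :: "vtx \<Rightarrow> real \<times> real" where
  "ppt v = (real_of_int (fst v), real_of_int (snd v))"

definition dual_seg :: "edge \<Rightarrow> (real \<times> real) set" where
  "dual_seg e = (let (a, b) = fst e in
     if snd e then closed_segment (dpt (a - 1, b)) (dpt (a, b))
     else closed_segment (dpt (a, b - 1)) (dpt (a, b)))"

definition simple_dual_cycle :: "vtx list \<Rightarrow> edge list \<Rightarrow> bool" where
  "simple_dual_cycle vs es \<longleftrightarrow>
     length vs \<ge> 3 \<and> length es = length vs \<and> distinct vs \<and>
     (\<forall>k < length vs. dual_ends (es ! k) = {vs ! k, vs ! ((k + 1) mod length vs)})"

definition union_disjoint_dual_cycles :: "edge set \<Rightarrow> bool" where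
  "union_disjoint_dual_cycles G \<longleftrightarrow>
     (\<exists>cs :: (vtx list \<times> edge list) list.
        cs \<noteq> [] \<and>
        (\<forall>c \<in> set cs. simple_dual_cycle (fst c) (snd c)) \<and>
        (\<forall>i < length cs. \<forall>j < length cs. i \<noteq> j \<longrightarrow>
            set (fst (cs ! i)) \<inter> set (fst (cs ! j)) = {}) \<and>
        G = (\<Union>c \<in> set cs. set (snd c)))"

text \<open>The curve in R^2 traced by gamma, and D_gamma: the vertices of Z^2 lying in the
  bounded domains (bounded connected components of the complement) enclosed by gamma.\<close>
definition curve :: "edge set \<Rightarrow> (real \<times> real) set" where
  "curve G = (\<Union>e \<in> G. dual_seg e)"

definition enclosed :: "edge set \<Rightarrow> vtx set" where
  "enclosed G = {v. ppt v \<notin> curve G \<and> bounded (connected_component_set (- curve G) (ppt v))}"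

definition absw :: "(edge \<Rightarrow> real) \<Rightarrow> edge set \<Rightarrow> real" where
  "absw w G = (\<Sum>e \<in> G. \<bar>w e\<bar>)"

text \<open>Finite subgraphs C are given by their finite vertex sets; the Hamiltonian runs over all
  neighbouring pairs of Z^2 inside C-bar, so only the vertex set matters.\<close>
definition bdry :: "vtx set \<Rightarrow> vtx set" where
  "bdry C = {v. v \<notin> C \<and> (\<exists>u \<in> C. adj u v)}"

definition cbar :: "vtx set \<Rightarrow> vtx set" where
  "cbar C = C \<union> bdry C"

definition Omega :: "vtx set \<Rightarrow> (vtx \<Rightarrow> real) \<Rightarrow> (vtx \<Rightarrow> real) set" where
  "Omega C \<tau> = {\<sigma>. (\<forall>v \<in> C. \<sigma> v = 1 \<or> \<sigma> v = -1) \<and> (\<forall>v \<in> bdry C. \<sigma> v = \<tau> v)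
                    \<and> (\<forall>v. v \<notin> cbar C \<longrightarrow> \<sigma> v = 0)}"

definition hamiltonian :: "vtx set \<Rightarrow> (edge \<Rightarrow> real) \<Rightarrow> (vtx \<Rightarrow> real) \<Rightarrow> real" where
  "hamiltonian C w \<sigma> = - (\<Sum>e \<in> {e. src e \<in> cbar C \<and> tgt e \<in> cbar C}. w e * \<sigma> (src e) * \<sigma> (tgt e))"

definition gibbs_prob :: "vtx set \<Rightarrow> (vtx \<Rightarrow> real) \<Rightarrow> (edge \<Rightarrow> real) \<Rightarrow> real \<Rightarrow> (vtx \<Rightarrow> real) set \<Rightarrow> real" where
  "gibbs_prob C \<tau> w \<beta> A =
     (\<Sum>\<sigma> \<in> Omega C \<tau> \<inter> A. exp (- \<beta> * hamiltonian C w \<sigma>)) /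
     (\<Sum>\<sigma> \<in> Omega C \<tau>. exp (- \<beta> * hamiltonian C w \<sigma>))"

definition unsatisfied :: "(edge \<Rightarrow> real) \<Rightarrow> (vtx \<Rightarrow> real) \<Rightarrow> edge \<Rightarrow> bool" where
  "unsatisfied w \<sigma> e \<longleftrightarrow> w e * \<sigma> (src e) * \<sigma> (tgt e) < 0"

definition spin :: "(vtx \<Rightarrow> bool) \<Rightarrow> vtx \<Rightarrow> real" where
  "spin s v = (if s v then 1 else -1)"

definition config_space :: "((edge \<Rightarrow> real) \<times> (vtx \<Rightarrow> bool)) measure" where
  "config_space = (\<Pi>\<^sub>M e \<in> UNIV. (borel :: real measure)) \<Otimes>\<^sub>M (\<Pi>\<^sub>M v \<in> UNIV. count_space (UNIV :: bool set))"

text \<open>Joint law nu of (w, sigma): w i.i.d. standard normal, and for every finite C the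
  conditional law of sigma on C-bar given w and sigma off C is P^{C, sigma|bdry C}_{w,beta}
  (DLR equations, stated via the defining property of conditional probabilities:
  for every event A measurable w.r.t. (w, sigma|_{C^c}) and every pattern xi on C).\<close>
definition EA_distribution :: "real \<Rightarrow> ((edge \<Rightarrow> real) \<times> (vtx \<Rightarrow> bool)) measure \<Rightarrow> bool" where
  "EA_distribution \<beta> M \<longleftrightarrow>
     prob_space M \<and> sets M = sets config_space \<and>
     distr M (\<Pi>\<^sub>M e \<in> UNIV. (borel :: real measure)) fst
       = (\<Pi>\<^sub>M e \<in> UNIV. density lborel std_normal_density) \<and>
     (\<forall>C A (\<xi> :: vtx \<Rightarrow> bool). finite C \<longrightarrow> A \<in> sets M \<longrightarrow>
        (\<forall>w s s'. (w, s) \<in> A \<longrightarrow> (\<forall>v. v \<notin> C \<longrightarrow> s' v = s v) \<longrightarrow> (w, s') \<in> A) \<longrightarrow>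
        measure M (A \<inter> {(w, s). \<forall>v \<in> C. s v = \<xi> v}) =
          set_lebesgue_integral M A
            (\<lambda>(w, s). gibbs_prob C (spin s) w \<beta> {\<sigma>. \<forall>v \<in> C. \<sigma> v = spin \<xi> v}))"

definition shift_cfg :: "vtx \<Rightarrow> (edge \<Rightarrow> real) \<times> (vtx \<Rightarrow> bool) \<Rightarrow> (edge \<Rightarrow> real) \<times> (vtx \<Rightarrow> bool)" where
  "shift_cfg a x = ((\<lambda>e. fst x ((fst (fst e) + fst a, snd (fst e) + snd a), snd e)),
                    (\<lambda>v. snd x (fst v + fst a, snd v + snd a)))"

definition translation_invariant :: "((edge \<Rightarrow> real) \<times> (vtx \<Rightarrow> bool)) measure \<Rightarrow> bool" where
  "translation_invariant M \<longleftrightarrow> (\<forall>a. distr M M (shift_cfg a) = M)"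

end

theory Submission
  imports Defs
begin

text \<open>Let S be the set of lattice vertices v for which the vertical ray below v crosses
  \<gamma> an odd number of times. Because every dual vertex has even degree in \<gamma>, the
  edges with exactly one endpoint in S are exactly the edges crossed by \<gamma>, and S is
  finite and lies in the bounded components of the complement of \<gamma>. Flipping all
  spins in S is therefore an involution that negates X = \<Sum>(e \<in> \<gamma>) w(e) \<sigma>(i) \<sigma>(j) and leaves
  all other bonds unchanged, so it multiplies the Boltzmann weight by exp(-2\<beta>X).
  In finite volume this maps the event "all of \<gamma> unsatisfied" into its complement
  with weight gain exp(2\<beta>|w|(\<gamma>)); in infinite volume the DLR equations for the
  finite set S give P(X \<le> -c) \<le> exp(-2\<beta>c) P(X \<ge> c).\<close>

section \<open>Even degree of unions of dual cycles\<close>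

definition even_dual_degree :: "edge set \<Rightarrow> bool" where
  "even_dual_degree G \<longleftrightarrow> (\<forall>d. even (card {e \<in> G. d \<in> dual_ends e}))"

lemma simple_dual_cycle_dual_ends_subset:
  assumes "simple_dual_cycle vs es" "e \<in> set es"
  shows "dual_ends e \<subseteq> set vs"
proof -
  from assms obtain k where k: "k < length vs" "e = es ! k"
    by (auto simp: in_set_conv_nth simple_dual_cycle_def)
  moreover have "(k + 1) mod length vs < length vs"
    using k(1) by (intro mod_less_divisor) linarith
  ultimately show ?thesis
    using assms(1) by (auto simp: simple_dual_cycle_def)
qed

lemma succ_mod_eq_if:
  fixes k n :: nat
  assumes "k < n"
  shows "(k + 1) mod n = (if k + 1 = n then 0 else k + 1)"
  using assms by auto

lemma pred_mod_eq_if: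
  fixes i n :: nat
  assumes "i < n"
  shows "(i + n - 1) mod n = (if i = 0 then n - 1 else i - 1)"
  using assms by (cases i) simp_all

lemma cyclic_succ_eq_iff:
  fixes i k n :: nat
  assumes "i < n" "k < n"
  shows "(k + 1) mod n = i \<longleftrightarrow> k = (i + n - 1) mod n"
  unfolding succ_mod_eq_if[OF assms(2)] pred_mod_eq_if[OF assms(1)] using assms by auto

lemma simple_dual_cycle_incident_indices:
  assumes cyc: "simple_dual_cycle vs es" and i: "i < length vs"
  shows "{k. k < length vs \<and> vs ! i \<in> dual_ends (es ! k)} = {i, (i + length vs - 1) mod length vs}"
proof -
  define n where "n = length vs"
  have n: "n \<ge> 3" "distinct vs"
    and ends: "\<And>k. k < n \<Longrightarrow> dual_ends (es ! k) = {vs ! k, vs ! ((k + 1) mod n)}"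
    using cyc by (auto simp: simple_dual_cycle_def n_def)
  have "vs ! i \<in> dual_ends (es ! k) \<longleftrightarrow> k = i \<or> k = (i + n - 1) mod n" if k: "k < n" for k
  proof -
    have "(k + 1) mod n < n" using k by simp
    then have "vs ! i = vs ! ((k + 1) mod n) \<longleftrightarrow> k = (i + n - 1) mod n"
      using i k n(2) cyclic_succ_eq_iff[of i n k] by (auto simp: nth_eq_iff_index_eq n_def)
    moreover have "vs ! i = vs ! k \<longleftrightarrow> k = i"
      using i k n(2) by (auto simp: nth_eq_iff_index_eq n_def)
    ultimately show ?thesis using ends[OF k] by blast
  qed
  moreover have "(i + n - 1) mod n < n" using n by simp
  ultimately show ?thesis using i by (auto simp: n_def)
qed

lemma simple_dual_cycle_even_degree:
  assumes cyc: "simple_dual_cycle vs es"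
  shows "even (card {e \<in> set es. d \<in> dual_ends e})"
proof (cases "d \<in> set vs")
  case False
  then have "{e \<in> set es. d \<in> dual_ends e} = {}"
    using simple_dual_cycle_dual_ends_subset[OF cyc] by auto
  then show ?thesis by (metis card.empty even_zero)
next
  case True
  define n where "n = length vs"
  have n: "n \<ge> 3" "length es = n" "distinct vs"
    and ends: "\<And>k. k < n \<Longrightarrow> dual_ends (es ! k) = {vs ! k, vs ! ((k + 1) mod n)}"
    using cyc by (auto simp: simple_dual_cycle_def n_def)
  from True obtain i where i: "i < n" "d = vs ! i" by (auto simp: in_set_conv_nth n_def)
  define j where "j = (i + n - 1) mod n"
  have j: "j < n" "(j + 1) mod n = i"
    using i n(1) cyclic_succ_eq_iff[of i n j] by (auto simp: j_def)
  have "{e \<in> set es. d \<in> dual_ends e} = (\<lambda>k. es ! k) ` {k. k < n \<and> d \<in> dual_ends (es ! k)}"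
    using n(2) by (smt (verit) Collect_cong in_set_conv_nth setcompr_eq_image)
  also have "\<dots> = {es ! i, es ! j}"
    using simple_dual_cycle_incident_indices[OF cyc, of i] i by (simp add: n_def j_def)
  finally have incident: "{e \<in> set es. d \<in> dual_ends e} = {es ! i, es ! j}" .
  have "es ! i \<noteq> es ! j"
  proof
    assume "es ! i = es ! j"
    then have "vs ! ((i + 1) mod n) \<in> {vs ! j, vs ! i}"
      using ends[OF i(1)] ends[OF j(1)] j(2) by auto
    moreover have "(i + 1) mod n < n" "(i + 1) mod n \<noteq> i" "(i + 1) mod n \<noteq> j"
      using i n(1) unfolding j_def succ_mod_eq_if[OF i(1)] pred_mod_eq_if[OF i(1)] by auto
    ultimately show False using j(1) i(1) n(3) by (auto simp: nth_eq_iff_index_eq n_def)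
  qed
  then show ?thesis unfolding incident by simp
qed

lemma union_disjoint_dual_cycles_D:
  assumes "union_disjoint_dual_cycles G"
  shows "finite G" "G \<noteq> {}" "even_dual_degree G"
proof -
  obtain cs where cs: "cs \<noteq> []" "\<forall>c \<in> set cs. simple_dual_cycle (fst c) (snd c)"
     "\<forall>i < length cs. \<forall>j < length cs. i \<noteq> j \<longrightarrow> set (fst (cs ! i)) \<inter> set (fst (cs ! j)) = {}"
     and G: "G = (\<Union>c \<in> set cs. set (snd c))"
    using assms by (auto simp: union_disjoint_dual_cycles_def)
  show "finite G" using G by simp
  obtain c where c: "c \<in> set cs" using cs(1) by (cases cs) auto
  then have "snd c \<noteq> []" using cs(2) by (auto simp: simple_dual_cycle_def)
  then show "G \<noteq> {}" using c G by auto
  have "even (card {e \<in> G. d \<in> dual_ends e})" for d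
  proof (cases "\<exists>c \<in> set cs. d \<in> set (fst c)")
    case False
    have "{e \<in> G. d \<in> dual_ends e} = {}"
    proof (intro equals0I)
      fix e assume "e \<in> {e \<in> G. d \<in> dual_ends e}"
      then obtain c where "c \<in> set cs" "e \<in> set (snd c)" "d \<in> dual_ends e" using G by auto
      then show False using False cs(2) simple_dual_cycle_dual_ends_subset by blast
    qed
    then show ?thesis by (metis card.empty even_zero)
  next
    case True
    then obtain c0 where c0: "c0 \<in> set cs" "d \<in> set (fst c0)" by auto
    have unique: "c = c0" if c: "c \<in> set cs" "d \<in> set (fst c)" for c
    proof -
      obtain a b where "a < length cs" "cs ! a = c" "b < length cs" "cs ! b = c0"
        using c(1) c0(1) by (auto simp: in_set_conv_nth)
      then show ?thesis using cs(3) c(2) c0(2) by blast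
    qed
    have "{e \<in> G. d \<in> dual_ends e} \<subseteq> {e \<in> set (snd c0). d \<in> dual_ends e}"
    proof
      fix e assume "e \<in> {e \<in> G. d \<in> dual_ends e}"
      then obtain c where c: "c \<in> set cs" "e \<in> set (snd c)" "d \<in> dual_ends e" using G by auto
      then have "c = c0" using unique cs(2) simple_dual_cycle_dual_ends_subset by blast
      then show "e \<in> {e \<in> set (snd c0). d \<in> dual_ends e}" using c by simp
    qed
    then have "{e \<in> G. d \<in> dual_ends e} = {e \<in> set (snd c0). d \<in> dual_ends e}"
      using G c0(1) by auto
    then show ?thesis using simple_dual_cycle_even_degree[of "fst c0" "snd c0" d] cs(2) c0(1) by simp
  qed
  then show "even_dual_degree G" by (simp add: even_dual_degree_def)
qed

section \<open>The parity interior of an even dual graph\<close>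

definition column_crossings :: "edge set \<Rightarrow> vtx \<Rightarrow> nat" where
  "column_crossings G v = card {y. y < snd v \<and> ((fst v, y), True) \<in> G}"

definition parity_inside :: "edge set \<Rightarrow> vtx set" where
  "parity_inside G = {v. odd (column_crossings G v)}"

definition edge_boundary :: "vtx set \<Rightarrow> edge set" where
  "edge_boundary S = {e. (src e \<in> S) \<noteq> (tgt e \<in> S)}"

lemma dual_vertex_incident_edges:
  "{e. (a, b) \<in> dual_ends e} = {((a, b), True), ((a + 1, b), True), ((a, b), False), ((a, b + 1), False)}"
proof (intro set_eqI)
  fix e :: edge
  obtain x y d where "e = ((x, y), d)" by (metis prod.collapse)
  then show "e \<in> {e. (a, b) \<in> dual_ends e} \<longleftrightarrow>
      e \<in> {((a, b), True), ((a + 1, b), True), ((a, b), False), ((a, b + 1), False)}"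
    by (cases d) (auto simp: dual_ends_def)
qed

lemma even_dual_degree_at:
  assumes "even_dual_degree G"
  shows "even (of_bool (((a, b), True) \<in> G) + of_bool (((a + 1, b), True) \<in> G)
             + of_bool (((a, b), False) \<in> G) + of_bool (((a, b + 1), False) \<in> G) :: nat)"
proof -
  let ?F = "{((a, b), True), ((a + 1, b), True), ((a, b), False), ((a, b + 1), False)}"
  have "{e \<in> G. (a, b) \<in> dual_ends e} = ?F \<inter> {e. e \<in> G}"
    using dual_vertex_incident_edges[of a b] by blast
  then have "card {e \<in> G. (a, b) \<in> dual_ends e} = (\<Sum>e \<in> ?F. of_bool (e \<in> G))"
    by simp
  also have "\<dots> = of_bool (((a, b), True) \<in> G) + of_bool (((a + 1, b), True) \<in> G)
             + of_bool (((a, b), False) \<in> G) + of_bool (((a, b + 1), False) \<in> G)"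
    by simp
  finally have "card {e \<in> G. (a, b) \<in> dual_ends e} = \<dots>" .
  moreover have "even (card {e \<in> G. (a, b) \<in> dual_ends e})"
    using assms by (simp add: even_dual_degree_def)
  ultimately show ?thesis by simp
qed

lemma finite_edge_set_bounded:
  assumes "finite (G :: edge set)"
  obtains N where "\<And>e. e \<in> G \<Longrightarrow> \<bar>fst (fst e)\<bar> \<le> N \<and> \<bar>snd (fst e)\<bar> \<le> N"
proof -
  have "bdd_above ((\<lambda>e. max \<bar>fst (fst e)\<bar> \<bar>snd (fst e)\<bar>) ` G)"
    using assms by (intro bdd_above_finite) simp
  then show ?thesis using that by (force simp: bdd_above_def)
qed

lemma column_crossings_step:
  assumes "finite G"
  shows "column_crossings G (x, y + 1) = column_crossings G (x, y) + of_bool (((x, y), True) \<in> G)"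
proof -
  have "{y'. y' < y \<and> ((x, y'), True) \<in> G} \<subseteq> (\<lambda>e. snd (fst e)) ` G"
    by force
  then have fin: "finite {y'. y' < y \<and> ((x, y'), True) \<in> G}"
    using assms by (rule finite_subset[OF _ finite_imageI])
  show ?thesis
  proof (cases "((x, y), True) \<in> G")
    case True
    then have "{y'. y' < y + 1 \<and> ((x, y'), True) \<in> G} = insert y {y'. y' < y \<and> ((x, y'), True) \<in> G}"
      by auto
    then show ?thesis using True fin by (simp add: column_crossings_def)
  next
    case False
    then have "{y'. y' < y + 1 \<and> ((x, y'), True) \<in> G} = {y'. y' < y \<and> ((x, y'), True) \<in> G}"
      by (auto simp: le_less)
    then show ?thesis using False by (simp add: column_crossings_def)
  qed
qed

lemma column_crossings_eq_0:
  assumes "\<And>y'. ((x, y'), True) \<in> G \<Longrightarrow> y \<le> y'"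
  shows "column_crossings G (x, y) = 0"
proof -
  have "{y'. y' < y \<and> ((x, y'), True) \<in> G} = {}"
    using assms by force
  then show ?thesis by (simp only: column_crossings_def fst_conv snd_conv card.empty)
qed

text \<open>Induct upwards from below G; each step is the even-degree condition at the dual
  vertex between the two columns.\<close>
lemma column_crossings_across:
  assumes fin: "finite G" and even: "even_dual_degree G"
  shows "even (column_crossings G (x, y) + column_crossings G (x + 1, y) + of_bool (((x, y), False) \<in> G))"
proof -
  obtain N where N: "\<And>e. e \<in> G \<Longrightarrow> \<bar>fst (fst e)\<bar> \<le> N \<and> \<bar>snd (fst e)\<bar> \<le> N"
    using finite_edge_set_bounded[OF fin] by blast
  have low: "column_crossings G (x', y') = 0 \<and> ((x', y'), False) \<notin> G" if "y' < - N" for x' y'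
    using that N[of "((x', y'), False)"] N by (force intro: column_crossings_eq_0)
  have "even (column_crossings G (x, y') + column_crossings G (x + 1, y') + of_bool (((x, y'), False) \<in> G))"
    if "- N - 1 \<le> y'" for y'
    using that
  proof (induction rule: int_ge_induct)
    case base
    then show ?case using low by simp
  next
    case (step k)
    have "column_crossings G (x, k + 1) + column_crossings G (x + 1, k + 1) + of_bool (((x, k + 1), False) \<in> G)
          + 2 * of_bool (((x, k), False) \<in> G)
        = (column_crossings G (x, k) + column_crossings G (x + 1, k) + of_bool (((x, k), False) \<in> G))
          + (of_bool (((x, k), True) \<in> G) + of_bool (((x + 1, k), True) \<in> G)
             + of_bool (((x, k), False) \<in> G) + of_bool (((x, k + 1), False) \<in> G))"
      by (simp add: column_crossings_step[OF fin])
    then show ?case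
      using step.IH even_dual_degree_at[OF even, of x k] by (metis even_add even_mult_iff even_numeral)
  qed
  then show ?thesis using low[of y] by (cases "- N - 1 \<le> y") auto
qed

lemma edge_boundary_parity_inside:
  assumes "finite G" "even_dual_degree G"
  shows "edge_boundary (parity_inside G) = G"
proof (intro set_eqI)
  fix e :: edge
  obtain x y d where e: "e = ((x, y), d)" by (metis prod.collapse)
  have "e \<in> edge_boundary (parity_inside G) \<longleftrightarrow>
      odd (column_crossings G (x, y)) \<noteq> odd (column_crossings G (if d then (x, y + 1) else (x + 1, y)))"
    by (simp add: e edge_boundary_def parity_inside_def src_def tgt_def)
  also have "\<dots> \<longleftrightarrow> e \<in> G"
  proof (cases d)
    case True
    then show ?thesis using column_crossings_step[OF assms(1), of x y] by (cases "e \<in> G") (auto simp: e)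
  next
    case False
    then show ?thesis using column_crossings_across[OF assms, of x y] by (auto simp: e)
  qed
  finally show "e \<in> edge_boundary (parity_inside G) \<longleftrightarrow> e \<in> G" .
qed

lemma parity_inside_subset_box:
  assumes fin: "finite G" and even: "even_dual_degree G"
    and N: "\<And>e. e \<in> G \<Longrightarrow> \<bar>fst (fst e)\<bar> \<le> N \<and> \<bar>snd (fst e)\<bar> \<le> N"
  shows "parity_inside G \<subseteq> {- N..N} \<times> {- N..N}"
proof -
  have outside_columns: "column_crossings G (x, y) = 0" if "\<bar>x\<bar> > N" for x y
    using that N by (force intro: column_crossings_eq_0)
  have above: "even (column_crossings G (x, y))" if y: "y > N" for x y
  proof -
    have "even (column_crossings G (x', y))" if "- N - 1 \<le> x'" for x'
      using that
    proof (induction rule: int_ge_induct)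
      case base
      then show ?case using outside_columns by simp
    next
      case (step k)
      have "((k, y), False) \<notin> G" using N[of "((k, y), False)"] y by auto
      then show ?case using step column_crossings_across[OF fin even, of k y] by simp
    qed
    then show ?thesis using outside_columns[of x y] by (cases "- N - 1 \<le> x") auto
  qed
  have below: "column_crossings G (x, y) = 0" if "y < - N" for x y
    using that N by (force intro: column_crossings_eq_0)
  show ?thesis
  proof
    fix v assume "v \<in> parity_inside G"
    then have odd: "odd (column_crossings G (fst v, snd v))" by (simp add: parity_inside_def)
    have "\<bar>fst v\<bar> \<le> N" using odd outside_columns[of "fst v" "snd v"] by (cases "N < \<bar>fst v\<bar>") auto
    moreover have "- N \<le> snd v" using odd below[of "snd v" "fst v"] by (cases "snd v < - N") auto
    moreover have "snd v \<le> N" using odd above[of "snd v" "fst v"] by (cases "N < snd v") auto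
    ultimately show "v \<in> {- N..N} \<times> {- N..N}" by (simp add: mem_Times_iff abs_le_iff)
  qed
qed

lemma finite_parity_inside:
  assumes "finite G" "even_dual_degree G"
  shows "finite (parity_inside G)"
proof -
  obtain N where "\<And>e. e \<in> G \<Longrightarrow> \<bar>fst (fst e)\<bar> \<le> N \<and> \<bar>snd (fst e)\<bar> \<le> N"
    using finite_edge_set_bounded[OF assms(1)] by blast
  then have "parity_inside G \<subseteq> {- N..N} \<times> {- N..N}" by (rule parity_inside_subset_box[OF assms])
  then show ?thesis by (rule finite_subset) simp
qed

section \<open>The parity interior lies in the enclosed region\<close>

lemma mem_closed_segment_horizontal:
  fixes a c t :: real
  shows "(t, c') \<in> closed_segment (a, c) (a + 1, c) \<longleftrightarrow> c' = c \<and> a \<le> t \<and> t \<le> a + 1"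
proof
  assume "(t, c') \<in> closed_segment (a, c) (a + 1, c)"
  then show "c' = c \<and> a \<le> t \<and> t \<le> a + 1"
    by (auto dest!: closed_segment_PairD simp: closed_segment_eq_real_ivl)
next
  assume "c' = c \<and> a \<le> t \<and> t \<le> a + 1"
  then show "(t, c') \<in> closed_segment (a, c) (a + 1, c)"
    unfolding in_segment by (intro conjI exI[of _ "t - a"]) (auto simp: algebra_simps)
qed

lemma mem_closed_segment_vertical:
  fixes a c t :: real
  shows "(c', t) \<in> closed_segment (c, a) (c, a + 1) \<longleftrightarrow> c' = c \<and> a \<le> t \<and> t \<le> a + 1"
proof
  assume "(c', t) \<in> closed_segment (c, a) (c, a + 1)"
  then show "c' = c \<and> a \<le> t \<and> t \<le> a + 1"
    by (auto dest!: closed_segment_PairD simp: closed_segment_eq_real_ivl)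
next
  assume "c' = c \<and> a \<le> t \<and> t \<le> a + 1"
  then show "(c', t) \<in> closed_segment (c, a) (c, a + 1)"
    unfolding in_segment by (intro conjI exI[of _ "t - a"]) (auto simp: algebra_simps)
qed

lemma mem_dual_seg:
  "(s, t) \<in> dual_seg ((x, y), d) \<longleftrightarrow>
     (if d then t = y + 1/2 \<and> x - 1/2 \<le> s \<and> s \<le> x + 1/2
      else s = x + 1/2 \<and> y - 1/2 \<le> t \<and> t \<le> y + 1/2)"
proof (cases d)
  case True
  then have seg: "dual_seg ((x, y), d) = closed_segment (x - 1/2, y + 1/2) ((x - 1/2) + 1, y + 1/2)"
    by (simp add: dual_seg_def dpt_def algebra_simps)
  show ?thesis
    unfolding seg mem_closed_segment_horizontal using True by auto
next
  case False
  then have seg: "dual_seg ((x, y), d) = closed_segment (x + 1/2, y - 1/2) (x + 1/2, (y - 1/2) + 1)"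
    by (simp add: dual_seg_def dpt_def algebra_simps)
  show ?thesis
    unfolding seg mem_closed_segment_vertical using False by auto
qed

definition crossing_parity :: "edge set \<Rightarrow> real \<times> real \<Rightarrow> bool" where
  "crossing_parity G z \<longleftrightarrow> (round (fst z), round (snd z)) \<in> parity_inside G"

lemma int_chain_eq:
  fixes f :: "int \<Rightarrow> 'a"
  assumes "a \<le> b" and succ: "\<And>k. a \<le> k \<Longrightarrow> k < b \<Longrightarrow> f (k + 1) = f k"
  shows "f b = f a"
proof -
  have "k \<le> b \<longrightarrow> f k = f a" if "a \<le> k" for k
    using that
  proof (induction rule: int_ge_induct)
    case (step k)
    then show ?case using succ[of k] by fastforce
  qed simp
  then show ?thesis using assms(1) by blast
qed

lemma round_bounds_between:
  fixes s1 s2 :: real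
  assumes "round s1 \<le> k" "k < round s2"
  shows "s1 \<le> k + 1/2" "k + 1/2 \<le> s2"
  using assms of_int_round_gt[of s1] of_int_round_le[of s2] by linarith+

lemma crossing_parity_horizontal_move:
  assumes fin: "finite G" and even: "even_dual_degree G" and "s1 \<le> s2"
    and free: "\<And>u. s1 \<le> u \<Longrightarrow> u \<le> s2 \<Longrightarrow> (u, t) \<notin> curve G"
  shows "crossing_parity G (s2, t) = crossing_parity G (s1, t)"
proof -
  have "((k + 1, round t) \<in> parity_inside G) = ((k, round t) \<in> parity_inside G)"
    if k: "round s1 \<le> k" "k < round s2" for k
  proof -
    have "(k + 1/2, t) \<notin> curve G"
      using free round_bounds_between[OF k] by blast
    moreover have "(k + 1/2, t) \<in> dual_seg ((k, round t), False)"
      using of_int_round_ge[of t] of_int_round_le[of t] by (simp add: mem_dual_seg)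
    ultimately have "((k, round t), False) \<notin> edge_boundary (parity_inside G)"
      unfolding edge_boundary_parity_inside[OF fin even] curve_def by blast
    then show ?thesis by (simp add: edge_boundary_def src_def tgt_def)
  qed
  then have "((round s2, round t) \<in> parity_inside G) = ((round s1, round t) \<in> parity_inside G)"
    by (rule int_chain_eq[where f = "\<lambda>k. (k, round t) \<in> parity_inside G", OF round_mono[OF \<open>s1 \<le> s2\<close>]])
  then show ?thesis by (simp add: crossing_parity_def)
qed

lemma crossing_parity_vertical_move:
  assumes fin: "finite G" and even: "even_dual_degree G" and "t1 \<le> t2"
    and free: "\<And>u. t1 \<le> u \<Longrightarrow> u \<le> t2 \<Longrightarrow> (s, u) \<notin> curve G"
  shows "crossing_parity G (s, t2) = crossing_parity G (s, t1)"
proof -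
  have "((round s, k + 1) \<in> parity_inside G) = ((round s, k) \<in> parity_inside G)"
    if k: "round t1 \<le> k" "k < round t2" for k
  proof -
    have "(s, k + 1/2) \<notin> curve G"
      using free round_bounds_between[OF k] by blast
    moreover have "(s, k + 1/2) \<in> dual_seg ((round s, k), True)"
      using of_int_round_ge[of s] of_int_round_le[of s] by (simp add: mem_dual_seg)
    ultimately have "((round s, k), True) \<notin> edge_boundary (parity_inside G)"
      unfolding edge_boundary_parity_inside[OF fin even] curve_def by blast
    then show ?thesis by (simp add: edge_boundary_def src_def tgt_def)
  qed
  then have "((round s, round t2) \<in> parity_inside G) = ((round s, round t1) \<in> parity_inside G)"
    by (rule int_chain_eq[where f = "\<lambda>k. (round s, k) \<in> parity_inside G", OF round_mono[OF \<open>t1 \<le> t2\<close>]])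
  then show ?thesis by (simp add: crossing_parity_def)
qed

lemma closed_curve: "finite G \<Longrightarrow> closed (curve G)"
  unfolding curve_def dual_seg_def by (intro closed_UN) (auto split: prod.splits)

lemma dist_Pair_le_sum_abs:
  fixes s t a b :: real
  shows "dist (s, t) (a, b) \<le> \<bar>a - s\<bar> + \<bar>b - t\<bar>"
  using sqrt_sum_squares_le_sum_abs[of "a - s" "b - t"]
  by (simp add: dist_Pair_Pair dist_real_def power2_commute)

text \<open>Move from z to z' first horizontally, then vertically: both legs stay in a ball
  around z that misses the curve.\<close>
lemma crossing_parity_locally_constant:
  assumes fin: "finite G" and even: "even_dual_degree G" and z: "z \<notin> curve G"
  shows "\<exists>r>0. \<forall>z'. dist z' z < r \<longrightarrow> crossing_parity G z' = crossing_parity G z"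
proof -
  obtain d where d: "d > 0" "ball z d \<subseteq> - curve G"
    using z closed_curve[OF fin] open_contains_ball_eq[of "- curve G"] by (auto simp: open_Compl)
  obtain s t where st: "z = (s, t)" by (cases z)
  have near: "crossing_parity G (s', t') = crossing_parity G (s, t)" if "dist (s', t') z < d / 2" for s' t'
  proof -
    have ds: "\<bar>s' - s\<bar> < d / 2" and dt: "\<bar>t' - t\<bar> < d / 2"
      using that dist_fst_le[of "(s', t')" z] dist_snd_le[of "(s', t')" z] by (auto simp: st dist_real_def)
    have off_curve: "(a, b) \<notin> curve G" if "\<bar>a - s\<bar> + \<bar>b - t\<bar> < d" for a b
    proof -
      have "(a, b) \<in> ball z d" using that dist_Pair_le_sum_abs[of s t a b] by (simp add: st)
      then show ?thesis using d(2) by blast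
    qed
    have horizontal: "(u, t) \<notin> curve G" if "min s s' \<le> u" "u \<le> max s s'" for u
    proof (rule off_curve)
      have "\<bar>u - s\<bar> \<le> \<bar>s' - s\<bar>" using that by (auto simp: min_def max_def abs_le_iff split: if_splits)
      then show "\<bar>u - s\<bar> + \<bar>t - t\<bar> < d" using ds by linarith
    qed
    have vertical: "(s', u) \<notin> curve G" if "min t t' \<le> u" "u \<le> max t t'" for u
    proof (rule off_curve)
      have "\<bar>u - t\<bar> \<le> \<bar>t' - t\<bar>" using that by (auto simp: min_def max_def abs_le_iff split: if_splits)
      then show "\<bar>s' - s\<bar> + \<bar>u - t\<bar> < d" using ds dt by linarith
    qed
    have "crossing_parity G (max s s', t) = crossing_parity G (min s s', t)"
      using horizontal by (intro crossing_parity_horizontal_move[OF fin even]) auto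
    then have first_leg: "crossing_parity G (s', t) = crossing_parity G (s, t)"
      by (cases "s \<le> s'") (simp_all add: min_def max_def)
    have "crossing_parity G (s', max t t') = crossing_parity G (s', min t t')"
      using vertical by (intro crossing_parity_vertical_move[OF fin even]) auto
    then have "crossing_parity G (s', t') = crossing_parity G (s', t)"
      by (cases "t \<le> t'") (simp_all add: min_def max_def)
    then show ?thesis using first_leg by (rule trans)
  qed
  show ?thesis
  proof (intro exI[of _ "d / 2"] conjI allI impI)
    fix z' :: "real \<times> real"
    assume "dist z' z < d / 2"
    then show "crossing_parity G z' = crossing_parity G z"
      using near[of "fst z'" "snd z'"] by (simp add: st)
  qed (use d(1) in simp)
qed

lemma half_integer_not_integer: "real_of_int m \<noteq> real_of_int k + 1/2"
proof
  assume "real_of_int m = real_of_int k + 1/2"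
  then have "real_of_int (2 * (m - k)) = 1" by simp
  then show False by presburger
qed

lemma ppt_notin_curve: "ppt v \<notin> curve G"
proof
  assume "ppt v \<in> curve G"
  then obtain x y d where "ppt v \<in> dual_seg ((x, y), d)"
    unfolding curve_def by (metis UN_E prod.collapse)
  then show False
    using half_integer_not_integer by (cases d) (auto simp: ppt_def mem_dual_seg)
qed

lemma bounded_crossing_parity:
  assumes fin: "finite G" and even: "even_dual_degree G"
  shows "bounded {z. crossing_parity G z}"
proof -
  obtain N where N: "\<And>e. e \<in> G \<Longrightarrow> \<bar>fst (fst e)\<bar> \<le> N \<and> \<bar>snd (fst e)\<bar> \<le> N"
    using finite_edge_set_bounded[OF fin] by blast
  have "{z. crossing_parity G z} \<subseteq> cbox (- real_of_int N - 1, - real_of_int N - 1) (real_of_int N + 1, real_of_int N + 1)"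
  proof
    fix z assume "z \<in> {z. crossing_parity G z}"
    then have "(round (fst z), round (snd z)) \<in> {- N..N} \<times> {- N..N}"
      using parity_inside_subset_box[OF fin even N] by (auto simp: crossing_parity_def)
    then have "\<bar>real_of_int (round (fst z))\<bar> \<le> N" "\<bar>real_of_int (round (snd z))\<bar> \<le> N"
      by (auto simp: abs_le_iff)
    then have "\<bar>fst z\<bar> \<le> N + 1" "\<bar>snd z\<bar> \<le> N + 1"
      using of_int_round_abs_le[of "fst z"] of_int_round_abs_le[of "snd z"] by linarith+
    moreover obtain a b where z: "z = (a, b)" by (cases z)
    ultimately show "z \<in> cbox (- real_of_int N - 1, - real_of_int N - 1) (real_of_int N + 1, real_of_int N + 1)"
      by (simp add: z cbox_Pair_iff abs_le_iff)
  qed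
  then show ?thesis by (rule bounded_subset[OF bounded_cbox])
qed

lemma parity_inside_subset_enclosed:
  assumes fin: "finite G" and even: "even_dual_degree G"
  shows "parity_inside G \<subseteq> enclosed G"
proof
  fix v assume v: "v \<in> parity_inside G"
  define K where "K = connected_component_set (- curve G) (ppt v)"
  have "crossing_parity G (ppt v) = crossing_parity G z" if "z \<in> K" for z
  proof (rule connected_local_const[where A = K])
    show "connected K" by (simp add: K_def)
    show "ppt v \<in> K" by (simp add: K_def ppt_notin_curve)
    show "z \<in> K" by (fact that)
    show "\<forall>a\<in>K. eventually (\<lambda>b. crossing_parity G a = crossing_parity G b) (at a within K)"
    proof
      fix a assume "a \<in> K"
      then have "a \<notin> curve G" using connected_component_subset[of "- curve G" "ppt v"] by (auto simp: K_def)
      then obtain r where "r > 0" "\<forall>b. dist b a < r \<longrightarrow> crossing_parity G b = crossing_parity G a"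
        using crossing_parity_locally_constant[OF fin even] by blast
      then show "eventually (\<lambda>b. crossing_parity G a = crossing_parity G b) (at a within K)"
        unfolding eventually_at by (intro exI[of _ r]) (auto simp: dist_commute)
    qed
  qed
  moreover have "crossing_parity G (ppt v)"
    using v by (simp add: crossing_parity_def ppt_def)
  ultimately have "K \<subseteq> {z. crossing_parity G z}" by blast
  then have "bounded K" by (rule bounded_subset[OF bounded_crossing_parity[OF fin even]])
  then show "v \<in> enclosed G" by (simp add: enclosed_def K_def ppt_notin_curve)
qed

section \<open>Spin flips and the Hamiltonian\<close>

definition flip_on :: "vtx set \<Rightarrow> (vtx \<Rightarrow> real) \<Rightarrow> vtx \<Rightarrow> real" where
  "flip_on S \<sigma> = (\<lambda>v. if v \<in> S then - \<sigma> v else \<sigma> v)"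

definition cbar_edges :: "vtx set \<Rightarrow> edge set" where
  "cbar_edges C = {e. src e \<in> cbar C \<and> tgt e \<in> cbar C}"

lemma flip_on_flip_on [simp]: "flip_on S (flip_on S \<sigma>) = \<sigma>"
  by (simp add: flip_on_def fun_eq_iff)

lemma adj_src_tgt: "adj (src e) (tgt e)" "adj (tgt e) (src e)"
  by (simp_all add: adj_def src_def tgt_def)

lemma adj_neighbours: "adj u v \<Longrightarrow> v \<in> {(fst u + 1, snd u), (fst u - 1, snd u), (fst u, snd u + 1), (fst u, snd u - 1)}"
  by (cases u; cases v) (auto simp: adj_def abs_if split: if_splits)

lemma finite_bdry: "finite C \<Longrightarrow> finite (bdry C)"
proof -
  assume "finite C"
  have "bdry C \<subseteq> (\<Union>u\<in>C. {(fst u + 1, snd u), (fst u - 1, snd u), (fst u, snd u + 1), (fst u, snd u - 1)})"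
    unfolding bdry_def using adj_neighbours by blast
  then show ?thesis by (rule finite_subset) (simp add: \<open>finite C\<close>)
qed

lemma finite_cbar_edges: "finite C \<Longrightarrow> finite (cbar_edges C)"
proof -
  assume "finite C"
  then have "finite (cbar C \<times> (UNIV :: bool set))" by (simp add: cbar_def finite_bdry)
  moreover have "cbar_edges C \<subseteq> cbar C \<times> UNIV" by (auto simp: cbar_edges_def src_def)
  ultimately show ?thesis by (rule finite_subset[rotated])
qed

lemma edge_boundary_subset_cbar_edges:
  assumes "S \<subseteq> C"
  shows "edge_boundary S \<subseteq> cbar_edges C"
proof
  fix e assume "e \<in> edge_boundary S"
  then have "src e \<in> C \<or> tgt e \<in> C" using assms by (auto simp: edge_boundary_def)
  then show "e \<in> cbar_edges C"
    using adj_src_tgt[of e] by (auto simp: cbar_edges_def cbar_def bdry_def)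
qed

lemma flip_on_edge_product:
  "flip_on S \<sigma> (src e) * flip_on S \<sigma> (tgt e) =
     (if e \<in> edge_boundary S then - (\<sigma> (src e) * \<sigma> (tgt e)) else \<sigma> (src e) * \<sigma> (tgt e))"
  by (auto simp: flip_on_def edge_boundary_def)

lemma hamiltonian_flip_on:
  assumes "finite C" "S \<subseteq> C"
  shows "hamiltonian C w (flip_on S \<sigma>) =
           hamiltonian C w \<sigma> + 2 * (\<Sum>e \<in> edge_boundary S. w e * \<sigma> (src e) * \<sigma> (tgt e))"
proof -
  define b where "b e = w e * \<sigma> (src e) * \<sigma> (tgt e)" for e
  have sub: "edge_boundary S \<subseteq> cbar_edges C" by (rule edge_boundary_subset_cbar_edges[OF assms(2)])
  have "(\<Sum>e \<in> cbar_edges C. w e * flip_on S \<sigma> (src e) * flip_on S \<sigma> (tgt e))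
      = (\<Sum>e \<in> cbar_edges C. b e - 2 * (if e \<in> edge_boundary S then b e else 0))"
    by (intro sum.cong) (auto simp: b_def mult.assoc flip_on_edge_product)
  also have "\<dots> = (\<Sum>e \<in> cbar_edges C. b e) - 2 * (\<Sum>e \<in> cbar_edges C. if e \<in> edge_boundary S then b e else 0)"
    by (simp add: sum_subtractf sum_distrib_left)
  also have "(\<Sum>e \<in> cbar_edges C. if e \<in> edge_boundary S then b e else 0) = (\<Sum>e \<in> edge_boundary S. b e)"
    using sub finite_cbar_edges[OF assms(1)] by (simp add: sum.inter_restrict[symmetric] Int_absorb1)
  finally show ?thesis
    by (simp add: hamiltonian_def cbar_edges_def[symmetric] b_def)
qed

definition patterns :: "vtx set \<Rightarrow> (vtx \<Rightarrow> bool) set" where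
  "patterns C = {\<eta>. \<forall>v. \<eta> v \<longrightarrow> v \<in> C}"

definition config_of :: "vtx set \<Rightarrow> (vtx \<Rightarrow> bool) \<Rightarrow> (vtx \<Rightarrow> real) \<Rightarrow> vtx \<Rightarrow> real" where
  "config_of C \<eta> \<tau> = (\<lambda>v. if v \<in> C then spin \<eta> v else if v \<in> bdry C then \<tau> v else 0)"

lemma finite_patterns: "finite C \<Longrightarrow> finite (patterns C)"
proof -
  assume "finite C"
  moreover have "patterns C \<subseteq> (\<lambda>B v. v \<in> B) ` Pow C"
  proof
    fix \<eta> assume "\<eta> \<in> patterns C"
    then have "{v. \<eta> v} \<in> Pow C" by (auto simp: patterns_def)
    then show "\<eta> \<in> (\<lambda>B v. v \<in> B) ` Pow C" by (rule rev_image_eqI) simp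
  qed
  ultimately show ?thesis by (meson finite_Pow_iff finite_imageI finite_subset)
qed

lemma config_of_in_Omega: "config_of C \<eta> \<tau> \<in> Omega C \<tau>"
  by (auto simp: config_of_def Omega_def spin_def cbar_def bdry_def)

lemma Omega_eq_image_config_of: "Omega C \<tau> = (\<lambda>\<eta>. config_of C \<eta> \<tau>) ` patterns C"
proof
  show "Omega C \<tau> \<subseteq> (\<lambda>\<eta>. config_of C \<eta> \<tau>) ` patterns C"
  proof
    fix \<sigma> assume \<sigma>: "\<sigma> \<in> Omega C \<tau>"
    define \<eta> where "\<eta> v \<longleftrightarrow> v \<in> C \<and> \<sigma> v = 1" for v
    have "config_of C \<eta> \<tau> = \<sigma>"
      using \<sigma> by (force simp: fun_eq_iff config_of_def spin_def \<eta>_def Omega_def cbar_def)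
    moreover have "\<eta> \<in> patterns C" by (simp add: patterns_def \<eta>_def)
    ultimately show "\<sigma> \<in> (\<lambda>\<eta>. config_of C \<eta> \<tau>) ` patterns C" by blast
  qed
qed (use config_of_in_Omega in blast)

lemma inj_on_config_of: "inj_on (\<lambda>\<eta>. config_of C \<eta> \<tau>) (patterns C)"
proof
  fix \<eta> \<eta>' assume pat: "\<eta> \<in> patterns C" "\<eta>' \<in> patterns C"
    and eq: "config_of C \<eta> \<tau> = config_of C \<eta>' \<tau>"
  show "\<eta> = \<eta>'"
  proof
    fix v
    show "\<eta> v = \<eta>' v"
    proof (cases "v \<in> C")
      case True
      then have "spin \<eta> v = spin \<eta>' v" using fun_cong[OF eq, of v] by (simp add: config_of_def)
      then show ?thesis by (auto simp: spin_def split: if_splits)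
    qed (use pat in \<open>unfold patterns_def, blast\<close>)
  qed
qed

lemma finite_Omega: "finite C \<Longrightarrow> finite (Omega C \<tau>)"
  by (simp add: Omega_eq_image_config_of finite_patterns)

lemma flip_on_in_Omega: "S \<subseteq> C \<Longrightarrow> \<sigma> \<in> Omega C \<tau> \<Longrightarrow> flip_on S \<sigma> \<in> Omega C \<tau>"
  by (auto simp: Omega_def flip_on_def cbar_def bdry_def)

section \<open>The finite-volume bound\<close>

lemma sum_ratio_lt_of_scaling_injection:
  fixes wt :: "'a \<Rightarrow> real"
  assumes fin: "finite \<Omega>" and ne: "\<Omega> \<noteq> {}" and pos: "\<And>x. x \<in> \<Omega> \<Longrightarrow> wt x > 0"
    and A: "A \<subseteq> \<Omega>" and inj: "inj_on \<phi> A" and into: "\<phi> ` A \<subseteq> \<Omega>" and disj: "A \<inter> \<phi> ` A = {}"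
    and scale: "\<And>x. x \<in> A \<Longrightarrow> wt (\<phi> x) = E * wt x" and E: "E > 0"
  shows "(\<Sum>x\<in>A. wt x) / (\<Sum>x\<in>\<Omega>. wt x) < 1 / E"
proof -
  define a where "a = (\<Sum>x\<in>A. wt x)"
  define Z where "Z = (\<Sum>x\<in>\<Omega>. wt x)"
  have finA: "finite A" using fin A by (rule finite_subset[rotated])
  have "E * a = (\<Sum>x\<in>\<phi> ` A. wt x)"
    unfolding a_def by (simp add: sum.reindex[OF inj] sum_distrib_left scale)
  then have "a + E * a = (\<Sum>x\<in>A \<union> \<phi> ` A. wt x)"
    using finA disj by (simp add: a_def sum.union_disjoint)
  also have "\<dots> \<le> Z"
    unfolding Z_def using A into pos by (intro sum_mono2[OF fin]) (auto intro: less_imp_le)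
  finally have "a + E * a \<le> Z" .
  moreover have "Z > 0" unfolding Z_def using fin ne pos by (intro sum_pos) auto
  moreover have "a \<ge> 0" unfolding a_def using A pos by (intro sum_nonneg) (auto intro: less_imp_le)
  ultimately have "a * E < Z"
    by (cases "a = 0") (auto simp: algebra_simps)
  then show ?thesis using \<open>Z > 0\<close> E by (simp add: a_def Z_def field_simps)
qed

lemma Omega_values_on_cbar:
  assumes "\<sigma> \<in> Omega D \<tau>" "\<forall>v\<in>bdry D. \<tau> v = 1 \<or> \<tau> v = -1" "v \<in> cbar D"
  shows "\<sigma> v = 1 \<or> \<sigma> v = -1"
  using assms unfolding Omega_def cbar_def by auto

lemma sum_unsatisfied_eq_neg_absw:
  assumes \<sigma>: "\<sigma> \<in> Omega D \<tau>" and \<tau>: "\<forall>v\<in>bdry D. \<tau> v = 1 \<or> \<tau> v = -1"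
    and G: "G \<subseteq> cbar_edges D" and unsat: "\<forall>e\<in>G. unsatisfied w \<sigma> e"
  shows "(\<Sum>e\<in>G. w e * \<sigma> (src e) * \<sigma> (tgt e)) = - absw w G"
proof -
  have "w e * \<sigma> (src e) * \<sigma> (tgt e) = - \<bar>w e\<bar>" if e: "e \<in> G" for e
  proof -
    have "src e \<in> cbar D" "tgt e \<in> cbar D" using G e by (auto simp: cbar_edges_def)
    then have "\<sigma> (src e) = 1 \<or> \<sigma> (src e) = -1" "\<sigma> (tgt e) = 1 \<or> \<sigma> (tgt e) = -1"
      by (simp_all add: Omega_values_on_cbar[OF \<sigma> \<tau>])
    moreover have "w e * \<sigma> (src e) * \<sigma> (tgt e) < 0"
      using unsat e by (simp add: unsatisfied_def)
    ultimately show ?thesis by (auto simp: abs_if)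
  qed
  then show ?thesis by (simp add: absw_def sum_negf)
qed

lemma gibbs_prob_unsatisfied_edge_boundary_lt:
  assumes D: "finite D" and S: "S \<subseteq> D" and ne: "edge_boundary S \<noteq> {}"
    and \<tau>: "\<forall>v\<in>bdry D. \<tau> v = 1 \<or> \<tau> v = -1"
  shows "gibbs_prob D \<tau> w \<beta> {\<sigma>. \<forall>e\<in>edge_boundary S. unsatisfied w \<sigma> e}
           < exp (- 2 * \<beta> * absw w (edge_boundary S))"
proof -
  define G where "G = edge_boundary S"
  define A where "A = Omega D \<tau> \<inter> {\<sigma>. \<forall>e\<in>G. unsatisfied w \<sigma> e}"
  define wt where "wt \<sigma> = exp (- \<beta> * hamiltonian D w \<sigma>)" for \<sigma>
  define E where "E = exp (2 * \<beta> * absw w G)"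
  have "wt (flip_on S \<sigma>) = E * wt \<sigma>" if "\<sigma> \<in> A" for \<sigma>
  proof -
    have "(\<Sum>e\<in>G. w e * \<sigma> (src e) * \<sigma> (tgt e)) = - absw w G"
      using that \<tau> edge_boundary_subset_cbar_edges[OF S]
      by (intro sum_unsatisfied_eq_neg_absw) (auto simp: A_def G_def)
    then have H: "hamiltonian D w (flip_on S \<sigma>) = hamiltonian D w \<sigma> - 2 * absw w G"
      using hamiltonian_flip_on[OF D S, of w \<sigma>] by (simp add: G_def)
    have "- \<beta> * hamiltonian D w (flip_on S \<sigma>) = 2 * \<beta> * absw w G + - \<beta> * hamiltonian D w \<sigma>"
      unfolding H by (simp add: algebra_simps)
    then show ?thesis unfolding wt_def E_def by (simp only: exp_add)
  qed
  moreover have "A \<inter> flip_on S ` A = {}"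
  proof (rule ccontr)
    assume "A \<inter> flip_on S ` A \<noteq> {}"
    then obtain \<sigma> where "\<sigma> \<in> A" "flip_on S \<sigma> \<in> A" by auto
    moreover obtain e where "e \<in> G" using ne by (auto simp: G_def)
    ultimately have "w e * \<sigma> (src e) * \<sigma> (tgt e) < 0" "w e * - (\<sigma> (src e) * \<sigma> (tgt e)) < 0"
      using flip_on_edge_product[of S \<sigma> e] by (auto simp: A_def G_def unsatisfied_def mult.assoc)
    then show False by simp
  qed
  moreover have "flip_on S ` A \<subseteq> Omega D \<tau>"
    using flip_on_in_Omega[OF S] by (auto simp: A_def)
  moreover have "inj_on (flip_on S) A"
    by (rule inj_on_inverseI[of _ "flip_on S"]) simp
  moreover have "Omega D \<tau> \<noteq> {}" using config_of_in_Omega by blast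
  ultimately have "(\<Sum>\<sigma>\<in>A. wt \<sigma>) / (\<Sum>\<sigma>\<in>Omega D \<tau>. wt \<sigma>) < 1 / E"
    by (intro sum_ratio_lt_of_scaling_injection[OF finite_Omega[OF D]]) (auto simp: A_def wt_def E_def)
  then show ?thesis
    by (simp add: gibbs_prob_def A_def G_def wt_def E_def exp_minus field_simps)
qed

definition coupling_sum :: "edge set \<Rightarrow> (edge \<Rightarrow> real) \<Rightarrow> (vtx \<Rightarrow> bool) \<Rightarrow> real" where
  "coupling_sum G w s = (\<Sum>e\<in>G. w e * spin s (src e) * spin s (tgt e))"

definition flip_pattern :: "vtx set \<Rightarrow> (vtx \<Rightarrow> bool) \<Rightarrow> vtx \<Rightarrow> bool" where
  "flip_pattern C \<xi> = (\<lambda>v. v \<in> C \<and> \<not> \<xi> v)"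

definition boltzmann_weight :: "vtx set \<Rightarrow> real \<Rightarrow> (edge \<Rightarrow> real) \<Rightarrow> (vtx \<Rightarrow> bool) \<Rightarrow> (vtx \<Rightarrow> bool) \<Rightarrow> real" where
  "boltzmann_weight C \<beta> w s \<eta> = exp (- \<beta> * hamiltonian C w (config_of C \<eta> (spin s)))"

text \<open>The DLR probability of seeing the pattern \<eta> on C, written as a function of (w, s)
  through a sum over patterns rather than over Omega, so that it is visibly measurable.\<close>
definition pattern_prob :: "vtx set \<Rightarrow> real \<Rightarrow> (vtx \<Rightarrow> bool) \<Rightarrow> (edge \<Rightarrow> real) \<times> (vtx \<Rightarrow> bool) \<Rightarrow> real" where
  "pattern_prob C \<beta> \<eta> x =
     boltzmann_weight C \<beta> (fst x) (snd x) \<eta> / (\<Sum>\<eta>'\<in>patterns C. boltzmann_weight C \<beta> (fst x) (snd x) \<eta>')"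

lemma flip_pattern_in_patterns: "flip_pattern C \<xi> \<in> patterns C"
  by (simp add: flip_pattern_def patterns_def)

lemma coupling_sum_flip:
  "coupling_sum (edge_boundary S) w (\<lambda>v. if v \<in> S then \<not> s v else s v) = - coupling_sum (edge_boundary S) w s"
proof -
  have "w e * spin (\<lambda>v. if v \<in> S then \<not> s v else s v) (src e) * spin (\<lambda>v. if v \<in> S then \<not> s v else s v) (tgt e)
        = - (w e * spin s (src e) * spin s (tgt e))" if "e \<in> edge_boundary S" for e
    using that by (auto simp: spin_def edge_boundary_def)
  then show ?thesis by (simp add: coupling_sum_def sum_negf)
qed

lemma gibbs_prob_pattern:
  assumes "\<xi> \<in> patterns C"
  shows "gibbs_prob C (spin s) w \<beta> {\<sigma>. \<forall>v\<in>C. \<sigma> v = spin \<xi> v} = pattern_prob C \<beta> \<xi> (w, s)"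
proof -
  have "Omega C (spin s) \<inter> {\<sigma>. \<forall>v\<in>C. \<sigma> v = spin \<xi> v} = {config_of C \<xi> (spin s)}"
  proof (intro equalityI subsetI)
    fix \<sigma> assume \<sigma>: "\<sigma> \<in> Omega C (spin s) \<inter> {\<sigma>. \<forall>v\<in>C. \<sigma> v = spin \<xi> v}"
    then obtain \<eta> where "\<sigma> = config_of C \<eta> (spin s)" using Omega_eq_image_config_of by blast
    with \<sigma> show "\<sigma> \<in> {config_of C \<xi> (spin s)}" by (auto simp: fun_eq_iff config_of_def)
  next
    fix \<sigma> assume "\<sigma> \<in> {config_of C \<xi> (spin s)}"
    then show "\<sigma> \<in> Omega C (spin s) \<inter> {\<sigma>. \<forall>v\<in>C. \<sigma> v = spin \<xi> v}"
      using config_of_in_Omega[of C \<xi> "spin s"] by (simp add: config_of_def)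
  qed
  moreover have "(\<Sum>\<sigma>\<in>Omega C (spin s). exp (- \<beta> * hamiltonian C w \<sigma>))
                = (\<Sum>\<eta>\<in>patterns C. boltzmann_weight C \<beta> w s \<eta>)"
    unfolding Omega_eq_image_config_of by (simp add: sum.reindex[OF inj_on_config_of] boltzmann_weight_def)
  ultimately show ?thesis
    by (simp add: gibbs_prob_def pattern_prob_def boltzmann_weight_def)
qed

lemma pattern_prob_bounds:
  assumes "finite C" "\<eta> \<in> patterns C"
  shows "0 \<le> pattern_prob C \<beta> \<eta> x" "pattern_prob C \<beta> \<eta> x \<le> 1"
proof -
  have pos: "0 < boltzmann_weight C \<beta> (fst x) (snd x) \<eta>'" for \<eta>'
    by (simp add: boltzmann_weight_def)
  have "boltzmann_weight C \<beta> (fst x) (snd x) \<eta> \<le> (\<Sum>\<eta>'\<in>patterns C. boltzmann_weight C \<beta> (fst x) (snd x) \<eta>')"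
    using assms pos finite_patterns by (intro member_le_sum) (auto intro: less_imp_le)
  then show "0 \<le> pattern_prob C \<beta> \<eta> x" "pattern_prob C \<beta> \<eta> x \<le> 1"
    using pos[of \<eta>] by (simp_all add: pattern_prob_def divide_le_eq less_imp_le)
qed

lemma boltzmann_weight_flip_le:
  assumes C: "finite C" and \<beta>: "0 \<le> \<beta>"
    and X: "coupling_sum (edge_boundary C) w (override_on s \<xi> C) \<le> - c"
  shows "boltzmann_weight C \<beta> w s \<xi> \<le> exp (- 2 * \<beta> * c) * boltzmann_weight C \<beta> w s (flip_pattern C \<xi>)"
proof -
  define \<sigma> where "\<sigma> = config_of C \<xi> (spin s)"
  have flip: "config_of C (flip_pattern C \<xi>) (spin s) = flip_on C \<sigma>"
    by (auto simp: fun_eq_iff \<sigma>_def config_of_def flip_on_def flip_pattern_def spin_def)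
  have agree: "\<sigma> v = spin (override_on s \<xi> C) v" if "v \<in> cbar C" for v
    using that by (auto simp: \<sigma>_def config_of_def override_on_def cbar_def spin_def)
  have "w e * \<sigma> (src e) * \<sigma> (tgt e) = w e * spin (override_on s \<xi> C) (src e) * spin (override_on s \<xi> C) (tgt e)"
    if "e \<in> edge_boundary C" for e
  proof -
    have "src e \<in> cbar C" "tgt e \<in> cbar C"
      using that edge_boundary_subset_cbar_edges[of C C] by (auto simp: cbar_edges_def)
    then show ?thesis by (simp add: agree)
  qed
  then have "(\<Sum>e\<in>edge_boundary C. w e * \<sigma> (src e) * \<sigma> (tgt e)) = coupling_sum (edge_boundary C) w (override_on s \<xi> C)"
    unfolding coupling_sum_def by (rule sum.cong[OF refl])
  then have "hamiltonian C w (config_of C (flip_pattern C \<xi>) (spin s))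
      = hamiltonian C w \<sigma> + 2 * coupling_sum (edge_boundary C) w (override_on s \<xi> C)"
    unfolding flip by (simp add: hamiltonian_flip_on[OF C order_refl])
  then have "hamiltonian C w (config_of C (flip_pattern C \<xi>) (spin s)) \<le> hamiltonian C w \<sigma> - 2 * c"
    using X by linarith
  then have "\<beta> * hamiltonian C w (config_of C (flip_pattern C \<xi>) (spin s)) \<le> \<beta> * (hamiltonian C w \<sigma> - 2 * c)"
    by (rule mult_left_mono[OF _ \<beta>])
  then have "- \<beta> * hamiltonian C w \<sigma> \<le> - 2 * \<beta> * c + - \<beta> * hamiltonian C w (config_of C (flip_pattern C \<xi>) (spin s))"
    by (simp add: algebra_simps)
  then show ?thesis
    unfolding boltzmann_weight_def \<sigma>_def[symmetric] by (simp flip: exp_add)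
qed

lemma pattern_prob_flip_le:
  assumes "finite C" "0 \<le> \<beta>"
    and "coupling_sum (edge_boundary C) (fst x) (override_on (snd x) \<xi> C) \<le> - c"
  shows "pattern_prob C \<beta> \<xi> x \<le> exp (- 2 * \<beta> * c) * pattern_prob C \<beta> (flip_pattern C \<xi>) x"
proof -
  have "0 \<le> (\<Sum>\<eta>'\<in>patterns C. boltzmann_weight C \<beta> (fst x) (snd x) \<eta>')"
    by (intro sum_nonneg) (simp add: boltzmann_weight_def)
  from divide_right_mono[OF boltzmann_weight_flip_le[OF assms] this] show ?thesis
    by (simp add: pattern_prob_def)
qed

lemma space_config_space: "space config_space = UNIV"
  by (simp add: config_space_def space_pair_measure space_PiM)

lemma measurable_interaction[measurable]: "(\<lambda>x. fst x e) \<in> borel_measurable config_space"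
  unfolding config_space_def by measurable

lemma measurable_spin_value[measurable]: "(\<lambda>x. snd x v) \<in> measurable config_space (count_space UNIV)"
  unfolding config_space_def by measurable

lemma measurable_spin[measurable]: "(\<lambda>x. spin (snd x) v) \<in> borel_measurable config_space"
  unfolding spin_def by measurable

lemma measurable_spin_override[measurable]: "(\<lambda>x. spin (override_on (snd x) \<xi> C) u) \<in> borel_measurable config_space"
  unfolding spin_def override_on_def by (cases "u \<in> C") simp_all

lemma measurable_coupling_sum[measurable]:
  "(\<lambda>x. coupling_sum G (fst x) (snd x)) \<in> borel_measurable config_space"
  "(\<lambda>x. coupling_sum G (fst x) (override_on (snd x) \<xi> C)) \<in> borel_measurable config_space"
  unfolding coupling_sum_def by measurable

lemma measurable_pattern_prob[measurable]: "pattern_prob C \<beta> \<eta> \<in> borel_measurable config_space"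
  unfolding pattern_prob_def boltzmann_weight_def hamiltonian_def config_of_def by measurable

lemma sets_config_space_Collect:
  assumes "Measurable.pred config_space P"
  shows "{x. P x} \<in> sets config_space"
  using assms by (simp add: pred_def space_config_space)

section \<open>The infinite-volume bound\<close>

definition cylinder :: "vtx set \<Rightarrow> (vtx \<Rightarrow> bool) \<Rightarrow> ((edge \<Rightarrow> real) \<times> (vtx \<Rightarrow> bool)) set" where
  "cylinder C \<xi> = {(w, s). \<forall>v\<in>C. s v = \<xi> v}"

definition determined_off :: "vtx set \<Rightarrow> ((edge \<Rightarrow> real) \<times> (vtx \<Rightarrow> bool)) set \<Rightarrow> bool" where
  "determined_off C A \<longleftrightarrow> (\<forall>w s s'. (w, s) \<in> A \<longrightarrow> (\<forall>v. v \<notin> C \<longrightarrow> s' v = s v) \<longrightarrow> (w, s') \<in> A)"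

lemma mem_cylinder: "x \<in> cylinder C \<xi> \<longleftrightarrow> (\<forall>v\<in>C. snd x v = \<xi> v)"
  by (cases x) (simp add: cylinder_def)

lemma sets_cylinder: "finite C \<Longrightarrow> cylinder C \<xi> \<in> sets config_space"
  unfolding cylinder_def case_prod_beta by (intro sets_config_space_Collect) measurable

lemma EA_distribution_pattern_measure:
  assumes EA: "EA_distribution \<beta> M" and C: "finite C" and A: "A \<in> sets M" "determined_off C A"
    and \<eta>: "\<eta> \<in> patterns C"
  shows "measure M (A \<inter> cylinder C \<eta>) = set_lebesgue_integral M A (pattern_prob C \<beta> \<eta>)"
proof -
  have "measure M (A \<inter> cylinder C \<eta>) =
      set_lebesgue_integral M A (\<lambda>(w, s). gibbs_prob C (spin s) w \<beta> {\<sigma>. \<forall>v \<in> C. \<sigma> v = spin \<eta> v})"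
    using EA C A unfolding EA_distribution_def determined_off_def cylinder_def by blast
  also have "(\<lambda>(w, s). gibbs_prob C (spin s) w \<beta> {\<sigma>. \<forall>v \<in> C. \<sigma> v = spin \<eta> v}) = pattern_prob C \<beta> \<eta>"
    using gibbs_prob_pattern[OF \<eta>] by (auto simp: fun_eq_iff)
  finally show ?thesis .
qed

lemma set_integrable_bounded_config:
  fixes h :: "(edge \<Rightarrow> real) \<times> (vtx \<Rightarrow> bool) \<Rightarrow> real"
  assumes "prob_space M" "sets M = sets config_space" "A \<in> sets M"
    and "h \<in> borel_measurable config_space" "\<And>x. \<bar>h x\<bar> \<le> K"
  shows "set_integrable M A h"
proof -
  interpret prob_space M by fact
  have "h \<in> borel_measurable M"
    using assms(4) measurable_cong_sets[OF assms(2) refl] by blast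
  moreover have "0 \<le> K" using assms(5) abs_ge_zero order_trans by blast
  ultimately show ?thesis
    unfolding set_integrable_def using assms(3,5)
    by (intro integrable_const_bound[where B = K]) (auto simp: indicator_def)
qed

lemma measure_cylinder_le_flip:
  assumes EA: "EA_distribution \<beta> M" and C: "finite C" and A: "A \<in> sets M" "determined_off C A"
    and \<xi>: "\<xi> \<in> patterns C" and q: "0 \<le> q"
    and le: "\<And>x. x \<in> A \<Longrightarrow> pattern_prob C \<beta> \<xi> x \<le> q * pattern_prob C \<beta> (flip_pattern C \<xi>) x"
  shows "measure M (A \<inter> cylinder C \<xi>) \<le> q * measure M (A \<inter> cylinder C (flip_pattern C \<xi>))"
proof -
  have PM: "prob_space M" and sM: "sets M = sets config_space"
    using EA by (simp_all add: EA_distribution_def)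
  have "set_integrable M A (pattern_prob C \<beta> \<xi>)"
    using pattern_prob_bounds[OF C \<xi>]
    by (intro set_integrable_bounded_config[OF PM sM A(1), where K = 1]) auto
  moreover have "set_integrable M A (\<lambda>x. q * pattern_prob C \<beta> (flip_pattern C \<xi>) x)"
    using pattern_prob_bounds[OF C flip_pattern_in_patterns] q
    by (intro set_integrable_bounded_config[OF PM sM A(1), where K = q])
       (auto simp: abs_mult intro: mult_left_le)
  ultimately have "set_lebesgue_integral M A (pattern_prob C \<beta> \<xi>)
      \<le> set_lebesgue_integral M A (\<lambda>x. q * pattern_prob C \<beta> (flip_pattern C \<xi>) x)"
    by (rule set_integral_mono) (rule le)
  then show ?thesis
    using EA_distribution_pattern_measure[OF EA C A] \<xi> flip_pattern_in_patterns by simp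
qed

lemma le_of_le_mult_compl:
  fixes m m' q :: real
  assumes "m \<le> q * m'" "m + m' \<le> 1" "q > 0"
  shows "m < q"
proof -
  have "m * (1 + q) \<le> q * m' + q * m" using assms(1) by (simp add: algebra_simps)
  also have "\<dots> = q * (m + m')" by (simp add: algebra_simps)
  also have "\<dots> \<le> q" using assms(2,3) by (simp add: mult_left_le)
  finally have "m * (1 + q) \<le> q" .
  then have "m \<le> q / (1 + q)" using assms(3) by (simp add: le_divide_eq)
  also have "\<dots> < q" using assms(3) by (simp add: divide_less_eq)
  finally show ?thesis .
qed

lemma determined_off_override_on:
  "determined_off S {x. P (fst x) (override_on (snd x) \<xi> S)}"
  unfolding determined_off_def
proof (intro allI impI)
  fix w s s' assume "(w, s) \<in> {x. P (fst x) (override_on (snd x) \<xi> S)}" "\<forall>v. v \<notin> S \<longrightarrow> s' v = s v"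
  moreover from this(2) have "override_on s' \<xi> S = override_on s \<xi> S"
    by (simp add: override_on_def fun_eq_iff)
  ultimately show "(w, s') \<in> {x. P (fst x) (override_on (snd x) \<xi> S)}" by simp
qed

lemma subset_UN_override_on_cylinder:
  "{x. P (fst x) (snd x)} \<subseteq> (\<Union>\<xi>\<in>patterns S. {x. P (fst x) (override_on (snd x) \<xi> S)} \<inter> cylinder S \<xi>)"
proof
  fix x assume "x \<in> {x. P (fst x) (snd x)}"
  moreover define \<xi> where "\<xi> v \<longleftrightarrow> v \<in> S \<and> snd x v" for v
  moreover have "override_on (snd x) \<xi> S = snd x" by (auto simp: override_on_def \<xi>_def)
  ultimately show "x \<in> (\<Union>\<xi>\<in>patterns S. {x. P (fst x) (override_on (snd x) \<xi> S)} \<inter> cylinder S \<xi>)"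
    by (intro UN_I[of \<xi>]) (auto simp: mem_cylinder patterns_def)
qed

lemma override_on_flip_pattern:
  assumes "x \<in> cylinder S (flip_pattern S \<xi>)"
  shows "override_on (snd x) \<xi> S = (\<lambda>v. if v \<in> S then \<not> snd x v else snd x v)"
proof
  fix v
  show "override_on (snd x) \<xi> S v = (if v \<in> S then \<not> snd x v else snd x v)"
    using assms by (auto simp: mem_cylinder flip_pattern_def override_on_def)
qed

lemma disjoint_family_on_flip_pattern_cylinder:
  "disjoint_family_on (\<lambda>\<xi>. B \<xi> \<inter> cylinder S (flip_pattern S \<xi>)) (patterns S)"
  by (auto simp: disjoint_family_on_def cylinder_def flip_pattern_def patterns_def fun_eq_iff)

lemma EA_distribution_coupling_sum_lt:
  assumes EA: "EA_distribution \<beta> M" and \<beta>: "0 \<le> \<beta>" and S: "finite S" and c: "c > 0"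
  shows "measure M {x. coupling_sum (edge_boundary S) (fst x) (snd x) \<le> - c} < exp (- 2 * \<beta> * c)"
proof -
  interpret prob_space M using EA by (simp add: EA_distribution_def)
  have sM: "sets M = sets config_space" using EA by (simp add: EA_distribution_def)
  define G where "G = edge_boundary S"
  define q where "q = exp (- 2 * \<beta> * c)"
  define A where "A \<xi> = {x. coupling_sum G (fst x) (override_on (snd x) \<xi> S) \<le> - c}" for \<xi>
  define E1 where "E1 = {x. coupling_sum G (fst x) (snd x) \<le> - c}"
  define E2 where "E2 = {x. c \<le> coupling_sum G (fst x) (snd x)}"
  have sets: "A \<xi> \<in> sets M" "cylinder S \<xi> \<in> sets M" "E1 \<in> sets M" "E2 \<in> sets M" for \<xi>
    unfolding sM A_def E1_def E2_def using sets_cylinder[OF S]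
    by (auto intro!: sets_config_space_Collect)
  have flipped: "A \<xi> \<inter> cylinder S (flip_pattern S \<xi>) \<subseteq> E2" for \<xi>
    using coupling_sum_flip override_on_flip_pattern by (fastforce simp: A_def E2_def G_def)
  have "E1 \<subseteq> (\<Union>\<xi>\<in>patterns S. A \<xi> \<inter> cylinder S \<xi>)"
    unfolding E1_def A_def by (rule subset_UN_override_on_cylinder[where P = "\<lambda>w s. coupling_sum G w s \<le> - c"])
  then have "measure M E1 \<le> (\<Sum>\<xi>\<in>patterns S. measure M (A \<xi> \<inter> cylinder S \<xi>))"
    using finite_patterns[OF S] sets
    by (intro order_trans[OF finite_measure_mono finite_measure_subadditive_finite]) auto
  also have "\<dots> \<le> (\<Sum>\<xi>\<in>patterns S. q * measure M (A \<xi> \<inter> cylinder S (flip_pattern S \<xi>)))"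
    using sets determined_off_override_on pattern_prob_flip_le[OF S \<beta>]
    by (intro sum_mono measure_cylinder_le_flip[OF EA S]) (auto simp: q_def A_def G_def)
  also have "\<dots> = q * measure M (\<Union>\<xi>\<in>patterns S. A \<xi> \<inter> cylinder S (flip_pattern S \<xi>))"
    using finite_patterns[OF S] sets disjoint_family_on_flip_pattern_cylinder
    by (subst finite_measure_finite_Union) (auto simp: sum_distrib_left)
  also have "\<dots> \<le> q * measure M E2"
    using flipped by (intro mult_left_mono finite_measure_mono) (auto simp: q_def sets)
  finally have "measure M E1 \<le> q * measure M E2" .
  moreover have "measure M E1 + measure M E2 \<le> 1"
  proof -
    have "E1 \<inter> E2 = {}" using c by (auto simp: E1_def E2_def)
    then show ?thesis
      using finite_measure_Union[OF sets(3,4)] prob_le_1[of "E1 \<union> E2"] by simp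
  qed
  ultimately show ?thesis
    using le_of_le_mult_compl[of "measure M E1" q "measure M E2"] by (simp add: q_def E1_def G_def)
qed

theorem mainTheorem4:
  fixes \<beta> :: real
    and M :: "((edge \<Rightarrow> real) \<times> (vtx \<Rightarrow> bool)) measure"
    and \<gamma> :: "edge set"
  assumes "0 \<le> \<beta>"
    and "EA_distribution \<beta> M"
    and "translation_invariant M"
    and "union_disjoint_dual_cycles \<gamma>"
  shows "(\<forall>c > 0. measure M {(w, s). (\<Sum>e \<in> \<gamma>. w e * spin s (src e) * spin s (tgt e)) \<le> - c}
                  < exp (- 2 * \<beta> * c))
       \<and> (\<forall>D \<tau> w. finite D \<longrightarrow> enclosed \<gamma> \<subseteq> D \<longrightarrow> (\<forall>v \<in> bdry D. \<tau> v = 1 \<or> \<tau> v = -1) \<longrightarrow>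
            gibbs_prob D \<tau> w \<beta> {\<sigma>. \<forall>e \<in> \<gamma>. unsatisfied w \<sigma> e} < exp (- 2 * \<beta> * absw w \<gamma>))"
proof -
  note \<gamma> = union_disjoint_dual_cycles_D[OF assms(4)]
  define S where "S = parity_inside \<gamma>"
  have boundary: "edge_boundary S = \<gamma>"
    unfolding S_def by (rule edge_boundary_parity_inside[OF \<gamma>(1,3)])
  have S: "finite S" "S \<subseteq> enclosed \<gamma>"
    unfolding S_def by (rule finite_parity_inside[OF \<gamma>(1,3)], rule parity_inside_subset_enclosed[OF \<gamma>(1,3)])
  show ?thesis
  proof (intro conjI allI impI)
    fix c :: real assume "c > 0"
    have "{(w, s). (\<Sum>e \<in> \<gamma>. w e * spin s (src e) * spin s (tgt e)) \<le> - c}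
        = {x. coupling_sum (edge_boundary S) (fst x) (snd x) \<le> - c}"
      by (auto simp: boundary coupling_sum_def)
    with EA_distribution_coupling_sum_lt[OF assms(2,1) S(1) \<open>c > 0\<close>]
    show "measure M {(w, s). (\<Sum>e \<in> \<gamma>. w e * spin s (src e) * spin s (tgt e)) \<le> - c} < exp (- 2 * \<beta> * c)"
      by simp
  next
    fix D and \<tau> :: "vtx \<Rightarrow> real" and w
    assume "finite D" "enclosed \<gamma> \<subseteq> D" "\<forall>v \<in> bdry D. \<tau> v = 1 \<or> \<tau> v = -1"
    with gibbs_prob_unsatisfied_edge_boundary_lt[of D S \<tau> w \<beta>] S(2) \<gamma>(2)
    show "gibbs_prob D \<tau> w \<beta> {\<sigma>. \<forall>e \<in> \<gamma>. unsatisfied w \<sigma> e} < exp (- 2 * \<beta> * absw w \<gamma>)"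
      by (simp add: boundary)
  qed
qed

end
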